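(* Let $a_1,\dots,a_n$ be positive integers, not both $n=1$ and $a_1=1$, and let $[a_1,\dots,a_n]=p/q$ with $p,q$ relatively prime positive integers. Then \[ [a_1,\dots,a_{n-1},a_n+1,a_n-1,a_{n-1},\dots,a_1]=\frac{p^2}{pq+(-1)^n}. \]
   Context: $[b_1,\dots,b_k]=b_1+\cfrac{1}{b_2+\cfrac{1}{\ddots+\cfrac{1}{b_k}}}$ denotes a continued fraction. An entry $0$ in the interior of a continued fraction is interpreted via $[\dots,a,0,b,\dots]=[\dots,a+b,\dots]$ (this occurs when $a_n=1$). *)

theory Defs
  imports Complex_Main
begin

text \<open>Since inverse (inverse y) = y holds in Isabelle fields (with inverse 0 = 0),
  an interior entry 0 automatically satisfies [..,a,0,b,..] = [..,a+b,..].\<close>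
fun cf :: "int list \<Rightarrow> rat" where
  "cf [] = 0"
| "cf [b] = of_int b"
| "cf (b # c # bs) = of_int b + 1 / cf (c # bs)"

end

theory Submission
  imports Defs
begin

text \<open>Encode [b_1,...,b_k] by the product of the matrices ((b_i, 1), (1, 0)). Its first
  column holds numerator and denominator of the continued fraction, its determinant is
  (-1)^k, and reversing the list transposes the product, since every factor is symmetric.
  With c = [a_1,...,a_(n-1)], the matrix of the palindromic list is
  M(c) ((a_n+1,1),(1,0)) ((a_n-1,1),(1,0)) M(c)^T, and expanding it in terms of the first
  column (p, q) of M(c) ((a_n,1),(1,0)) gives the first column (p^2, pq + (-1)^n).\<close>

type_synonym 'a mat2 = "'a \<times> 'a \<times> 'a \<times> 'a"

fun mat2_mult :: "'a::comm_ring_1 mat2 \<Rightarrow> 'a mat2 \<Rightarrow> 'a mat2" where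
  "mat2_mult (a, b, c, d) (e, f, g, h) = (a*e + b*g, a*f + b*h, c*e + d*g, c*f + d*h)"

fun mat2_transpose :: "'a mat2 \<Rightarrow> 'a mat2" where
  "mat2_transpose (a, b, c, d) = (a, c, b, d)"

lemma mat2_mult_assoc: "mat2_mult (mat2_mult A B) C = mat2_mult A (mat2_mult B C)"
  by (cases A; cases B; cases C) (simp add: algebra_simps)

lemma mat2_mult_1_left: "mat2_mult (1, 0, 0, 1) A = A"
  by (cases A) simp

lemma mat2_transpose_mult:
  "mat2_transpose (mat2_mult A B) = mat2_mult (mat2_transpose B) (mat2_transpose A)"
  by (cases A; cases B) (simp add: algebra_simps)

primrec cf_matrix :: "'a::comm_ring_1 list \<Rightarrow> 'a mat2" where
  "cf_matrix [] = (1, 0, 0, 1)"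
| "cf_matrix (b # bs) = mat2_mult (b, 1, 1, 0) (cf_matrix bs)"

lemma cf_matrix_append: "cf_matrix (xs @ ys) = mat2_mult (cf_matrix xs) (cf_matrix ys)"
  by (induction xs) (simp_all add: mat2_mult_1_left mat2_mult_assoc)

lemma cf_matrix_rev: "cf_matrix (rev xs) = mat2_transpose (cf_matrix xs)"
proof (induction xs)
  case Nil
  then show ?case by simp
next
  case (Cons b bs)
  have "cf_matrix (rev (b # bs)) = mat2_mult (mat2_transpose (cf_matrix bs)) (b, 1, 1, 0)"
    by (simp add: cf_matrix_append Cons.IH)
  also have "\<dots> = mat2_transpose (cf_matrix (b # bs))"
    by (simp add: mat2_transpose_mult)
  finally show ?case .
qed

lemma cf_matrix_det:
  assumes "cf_matrix xs = (a, b, c, d)"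
  shows "a*d - b*c = (-1) ^ length xs"
  using assms
proof (induction xs arbitrary: a b c d)
  case Nil
  then show ?case by simp
next
  case (Cons x xs)
  obtain a' b' c' d' where "cf_matrix xs = (a', b', c', d')"
    by (cases "cf_matrix xs") auto
  with Cons show ?case by (auto simp: algebra_simps)
qed

lemma cf_matrix_palindrome:
  assumes "cf_matrix (c @ [t]) = (p, p', q, q')"
  shows "cf_matrix (c @ [t + 1, t - 1] @ rev c)
           = (p^2, p*q - (-1) ^ Suc (length c), p*q + (-1) ^ Suc (length c), q^2)"
proof -
  obtain P P' Q Q' where Mc: "cf_matrix c = (P, P', Q, Q')"
    by (cases "cf_matrix c") auto
  have pq: "p = P*t + P'" "q = Q*t + Q'"
    using assms by (auto simp: cf_matrix_append Mc)
  have "(-1) ^ Suc (length c) = P'*Q - P*Q'"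
    using cf_matrix_det[OF Mc] by (simp add: algebra_simps)
  then show ?thesis
    by (simp add: cf_matrix_append cf_matrix_rev Mc pq algebra_simps power2_eq_square)
qed

lemma cf_matrix_coprime:
  assumes "cf_matrix xs = (a, b, c, d)"
  shows "coprime a (c::int)"
proof (rule coprimeI)
  fix k assume "k dvd a" "k dvd c"
  then have "k dvd a*d - b*c" by simp
  moreover have "is_unit (a*d - b*c)"
    using cf_matrix_det[OF assms] by simp
  ultimately show "is_unit k"
    by (rule dvd_unit_imp_unit)
qed

text \<open>Nonnegative entries with a positive last one suffice: an interior zero then never
  produces a zero denominator, so Isabelle's division by zero is never exercised.\<close>

lemma cf_eq_cf_matrix:
  assumes "xs \<noteq> []" and "\<forall>x\<in>set xs. x \<ge> 0" and "last xs > 0"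
    and "cf_matrix xs = (a, b, c, d)"
  shows "a > 0 \<and> c > 0 \<and> cf xs = of_int a / of_int c"
  using assms
proof (induction xs arbitrary: a b c d)
  case Nil
  then show ?case by simp
next
  case (Cons x xs)
  show ?case
  proof (cases "xs = []")
    case True
    with Cons.prems show ?thesis by simp
  next
    case False
    obtain a' b' c' d' where xs: "cf_matrix xs = (a', b', c', d')"
      by (cases "cf_matrix xs") auto
    have IH: "a' > 0" "c' > 0" "cf xs = of_int a' / of_int c'"
      using Cons.IH[OF False _ _ xs] Cons.prems False by auto
    have "a = x*a' + c'" "c = a'"
      using Cons.prems(4) xs by auto
    moreover have "x*a' \<ge> 0"
      using Cons.prems(2) IH(1) by simp
    moreover obtain y ys where "xs = y # ys"
      using False by (cases xs) auto
    then have "cf (x # xs) = of_int x + of_int c' / of_int a'"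
      using IH(3) by simp
    ultimately show ?thesis
      using IH(1,2) by (simp add: field_simps)
  qed
qed

lemma quotient_of_int_div:
  assumes "q > 0" and "coprime p q"
  shows "quotient_of (of_int p / of_int q) = (p, q)"
  using assms by (simp add: Fract_of_int_quotient [symmetric] quotient_of_Fract)

lemma quotient_of_cf:
  assumes "xs \<noteq> []" and "\<forall>x\<in>set xs. x \<ge> 0" and "last xs > 0"
    and "cf_matrix xs = (a, b, c, d)"
  shows "quotient_of (cf xs) = (a, c)"
  using cf_eq_cf_matrix[OF assms] quotient_of_int_div cf_matrix_coprime[OF assms(4)] by simp

theorem theorem3p18:
  fixes a :: "int list" and p q :: int
  assumes "a \<noteq> []"
    and "\<forall>x\<in>set a. x > 0"
    and "\<not> (length a = 1 \<and> hd a = 1)"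
    and "p > 0" and "q > 0" and "coprime p q"
    and "cf a = of_int p / of_int q"
  shows "cf (butlast a @ [last a + 1, last a - 1] @ rev (butlast a))
           = of_int (p ^ 2) / of_int (p * q + (-1) ^ length a)"
proof -
  define c t where "c = butlast a" and "t = last a"
  have a: "a = c @ [t]"
    using assms(1) by (simp add: c_def t_def)
  have t_pos: "t > 0" and c_pos: "\<forall>x\<in>set c. x > 0"
    using assms(2) a by auto
  obtain p' b q' d where M: "cf_matrix (c @ [t]) = (p', b, q', d)"
    by (cases "cf_matrix (c @ [t])") auto
  have "(p', q') = quotient_of (cf a)"
    using quotient_of_cf[OF _ _ _ M] a t_pos c_pos by (auto simp: less_imp_le)
  also have "\<dots> = (p, q)"
    using quotient_of_int_div[OF assms(5,6)] assms(7) by simp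
  finally have "p' = p" "q' = q"
    by simp_all
  moreover have "length a = Suc (length c)"
    using a by simp
  ultimately have palindrome: "cf_matrix (c @ [t + 1, t - 1] @ rev c)
      = (p^2, p*q - (-1) ^ length a, p*q + (-1) ^ length a, q^2)"
    using cf_matrix_palindrome[OF M] by simp
  have "last (c @ [t + 1, t - 1] @ rev c) > 0"
    using assms(3) a t_pos c_pos by (cases c) (auto simp: last_rev)
  then have "cf (c @ [t + 1, t - 1] @ rev c) = of_int (p^2) / of_int (p*q + (-1) ^ length a)"
    using cf_eq_cf_matrix[OF _ _ _ palindrome] t_pos c_pos by (auto simp: less_imp_le)
  then show ?thesis
    by (simp add: c_def t_def)
qed

end
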